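(* Assume (A2) and (A3). Then for every stage $l\ge1$ of Method (BCV), the number of inner iterations (changes of the index $k$) is finite, i.e. after finitely many steps Step 1 finds no admissible pair and the stage ends with $z^l=x^k$.
   Context: Setting: limit problem $\min_{x\in D}f(x)$ with $D=\{x\in X:\langle a,x\rangle=\beta\}$, $X=\prod_{i=1}^n[\alpha'_i,\alpha''_i]$. Approximating problems $\min_{x\in D_l}f_l(x)$, $l=0,1,2,\dots$, with $D_l=\{x\in X_l:\langle a^l,x\rangle=\beta_l\}$, $X_l=\prod_{i=1}^n[\alpha'_{il},\alpha''_{il}]$, $a^l=(a_{1l},\dots,a_{nl})^\top$. (A2): for each $l$, $D_l\neq\varnothing$, $a_{il}>0$ and $-\infty<\alpha'_{il}<\alpha''_{il}<+\infty$ for all $i$; and $\alpha'_{il}\to\alpha'_i$, $\alpha''_{il}\to\alpha''_i$, $a^l\to a$, $\beta_l\to\beta$ as $l\to\infty$. (A3): each $f_l$ is continuously differentiable on (a neighborhood of) $X_l$, and whenever $y^l\in D_l$ and $y^l\to\bar y$, the gradients satisfy $\nabla f_l(y^l)\to\bar g$ for some $\bar g\in\partial^{\uparrow}f(\bar y)$ (Clarke generalized gradient). Notation: $g_{il}(x)=\partial f_l(x)/\partial x_i$, $h_{il}(x)=g_{il}(x)/a_{il}$; given positive sequence $\{\varepsilon_l\}$, $I_l^-(x)=\{i\in I: x_i\ge\alpha'_{il}+\varepsilon_l/a_{il}\}$, $I_l^+(x)=\{i\in I: x_i\le\alpha''_{il}-\varepsilon_l/a_{il}\}$, where $I=\{1,\dots,n\}$;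 $\pi_V$ is Euclidean projection onto $V$. Method (BCV): choose $z^0\in D_0$, $\sigma\in(0,1)$, $\theta\in(0,1)$, positive sequences $\delta_l\searrow0$, $\varepsilon_l\searrow0$; set $l=1$. Stage $l$: set $k=0$, $x^0=\pi_{D_l}(z^{l-1})$. Step 1: if there exist $i\in I_l^-(x^k)$, $j\in I_l^+(x^k)$ with $h_{il}(x^k)-h_{jl}(x^k)\ge\delta_l$, choose any such pair, set $i_k=i$, $j_k=j$, $\gamma_k=\min\{a_{il}(x^k_i-\alpha'_{il}),\,a_{jl}(\alpha''_{jl}-x^k_j)\}$ and go to Step 2; otherwise set $z^l=x^k$, $l:=l+1$ and start the next stage. Step 2: define $d^k$ by $d^k_i=-1/a_{il}$, $d^k_j=1/a_{jl}$, $d^k_s=0$ for $s\ne i,j$; let $m$ be the smallest nonnegative integer with $f_l(x^k+\theta^m\gamma_kd^k)\le f_l(x^k)+\sigma\theta^m\gamma_k\langle\nabla f_l(x^k),d^k\rangle$; set $\lambda_k=\theta^m\gamma_k$, $x^{k+1}=x^k+\lambda_kd^k$, $k:=k+1$, and return to Step 1. *)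

theory Defs
  imports "HOL-Analysis.Analysis"
begin

text \<open>Vectors in R^n are modelled as real^'n; the index set I = {1..n} is UNIV :: 'n set.\<close>

definition feas_set :: "real^'n \<Rightarrow> real^'n \<Rightarrow> real^'n \<Rightarrow> real \<Rightarrow> (real^'n) set" where
  "feas_set lo up a b = {x. (\<forall>i. lo $ i \<le> x $ i \<and> x $ i \<le> up $ i) \<and> a \<bullet> x = b}"

definition box_set :: "real^'n \<Rightarrow> real^'n \<Rightarrow> (real^'n) set" where
  "box_set lo up = {x. \<forall>i. lo $ i \<le> x $ i \<and> x $ i \<le> up $ i}"

definition grad :: "(real^'n \<Rightarrow> real) \<Rightarrow> real^'n \<Rightarrow> real^'n" where
  "grad F x = (\<chi> i. frechet_derivative F (at x) (axis i 1))"

definition clarke_dir :: "(real^'n \<Rightarrow> real) \<Rightarrow> real^'n \<Rightarrow> real^'n \<Rightarrow> ereal" where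
  "clarke_dir F x v =
     Limsup (at (x, 0) within (UNIV \<times> {0<..}))
       (\<lambda>(y, t). ereal ((F (y + t *\<^sub>R v) - F y) / t))"

definition clarke_grad :: "(real^'n \<Rightarrow> real) \<Rightarrow> real^'n \<Rightarrow> (real^'n) set" where
  "clarke_grad F x = {g. \<forall>v. ereal (g \<bullet> v) \<le> clarke_dir F x v}"

definition bcv_step ::
  "(real^'n \<Rightarrow> real) \<Rightarrow> real^'n \<Rightarrow> real^'n \<Rightarrow> real^'n \<Rightarrow> real \<Rightarrow> real \<Rightarrow> real \<Rightarrow> real
   \<Rightarrow> real^'n \<Rightarrow> real^'n \<Rightarrow> bool" where
  "bcv_step F lo up a del eps sig th x x' \<longleftrightarrow>
     (\<exists>i j.
        x $ i \<ge> lo $ i + eps / a $ i \<and>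
        x $ j \<le> up $ j - eps / a $ j \<and>
        grad F x $ i / a $ i - grad F x $ j / a $ j \<ge> del \<and>
        (let \<gamma> = min (a $ i * (x $ i - lo $ i)) (a $ j * (up $ j - x $ j));
             d = (\<chi> s. if s = i then - 1 / a $ i else if s = j then 1 / a $ j else 0);
             m = (LEAST m::nat. F (x + (th ^ m * \<gamma>) *\<^sub>R d)
                     \<le> F x + sig * th ^ m * \<gamma> * (grad F x \<bullet> d))
         in x' = x + (th ^ m * \<gamma>) *\<^sub>R d))"

end

theory Submission
  imports Defs
begin

text \<open>On a compact box the gradient of a \<open>C\<^sup>1\<close> function is uniformly continuous, so the
  Armijo test of Step 2 is passed by every step length below a threshold \<open>\<eta>\<close> that does not
  depend on the current point. Since the admissibility conditions of Step 1 keep the initial step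
  \<open>\<gamma>\<^sub>k\<close> above \<open>\<epsilon>\<^sub>l\<close>, every accepted step is at least \<open>min \<epsilon>\<^sub>l (\<theta> \<eta>)\<close> long and decreases
  \<open>f\<^sub>l\<close> by a fixed positive amount. The iterates stay in the box, where \<open>f\<^sub>l\<close> is bounded below,
  so there can be only finitely many of them. Only the nonemptiness of \<open>D\<^sub>l\<close>, the positivity of
  \<open>a\<^sup>l\<close> and the \<open>C\<^sup>1\<close> part of (A3) at the single stage \<open>l\<close> are used.\<close>

lemma box_set_eq_cbox: "box_set lo up = cbox lo (up::real^'n)"
  by (auto simp: box_set_def mem_box_cart)

lemma feas_set_subset_cbox: "feas_set lo up a b \<subseteq> cbox lo up"
  by (auto simp: feas_set_def mem_box_cart)

lemma closed_feas_set: "closed (feas_set lo up a b)"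
proof -
  have "feas_set lo up a b = cbox lo up \<inter> {x. a \<bullet> x = b}"
    by (auto simp: feas_set_def mem_box_cart)
  then show ?thesis
    by (metis closed_Int closed_cbox closed_hyperplane)
qed

lemma grad_eq_of_has_derivative:
  assumes "(F has_derivative (\<lambda>h. g \<bullet> h)) (at x)"
  shows "grad F x = g"
proof -
  have "frechet_derivative F (at x) = (\<lambda>h. g \<bullet> h)"
    using assms frechet_derivative_at by metis
  then show ?thesis
    by (simp add: grad_def vec_eq_iff inner_axis)
qed

lemma uniform_first_order_bound:
  fixes F :: "'a::real_inner \<Rightarrow> real"
  assumes "compact C" "continuous_on C G"
    and der: "\<And>y. y \<in> C \<Longrightarrow> (F has_derivative (\<lambda>h. G y \<bullet> h)) (at y)"
    and "e > 0"
  obtains \<eta> where "\<eta> > 0"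
    and "\<And>y d t. y \<in> C \<Longrightarrow> 0 \<le> t \<Longrightarrow> t * norm d < \<eta> \<Longrightarrow>
           (\<And>s. 0 \<le> s \<Longrightarrow> s \<le> t \<Longrightarrow> y + s *\<^sub>R d \<in> C) \<Longrightarrow>
           F (y + t *\<^sub>R d) \<le> F y + t * (G y \<bullet> d) + t * norm d * e"
proof -
  have "uniformly_continuous_on C G"
    by (rule compact_uniformly_continuous[OF assms(2,1)])
  then obtain \<eta> where "\<eta> > 0"
    and \<eta>: "\<And>y y'. y \<in> C \<Longrightarrow> y' \<in> C \<Longrightarrow> dist y' y < \<eta> \<Longrightarrow> dist (G y') (G y) < e"
    using \<open>e > 0\<close> unfolding uniformly_continuous_on_def by metis
  have "F (y + t *\<^sub>R d) \<le> F y + t * (G y \<bullet> d) + t * norm d * e"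
    if y: "y \<in> C" and t: "0 \<le> t" "t * norm d < \<eta>"
      and seg: "\<And>s. 0 \<le> s \<Longrightarrow> s \<le> t \<Longrightarrow> y + s *\<^sub>R d \<in> C" for y d t
  proof (cases "t = 0")
    case False
    have "((\<lambda>s. F (y + s *\<^sub>R d)) has_real_derivative G (y + s *\<^sub>R d) \<bullet> d) (at s)"
      if "0 \<le> s" "s \<le> t" for s
    proof -
      have "((\<lambda>s. y + s *\<^sub>R d) has_derivative (\<lambda>h. h *\<^sub>R d)) (at s)"
        by (auto intro!: derivative_eq_intros)
      from has_derivative_compose[OF this der[OF seg[OF that]]]
      show ?thesis
        by (simp add: has_field_derivative_def mult.commute[of _ "G (y + s *\<^sub>R d) \<bullet> d"])
    qed
    then obtain z where z: "0 < z" "z < t"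
      and mvt: "F (y + t *\<^sub>R d) - F y = t * (G (y + z *\<^sub>R d) \<bullet> d)"
      using MVT2[of 0 t "\<lambda>s. F (y + s *\<^sub>R d)"] t False by force
    have "dist (y + z *\<^sub>R d) y \<le> t * norm d"
      using z by (simp add: dist_norm mult_right_mono)
    then have "norm (G (y + z *\<^sub>R d) - G y) \<le> e"
      using \<eta>[OF y seg, of z] z t by (simp add: dist_norm)
    then have "(G (y + z *\<^sub>R d) - G y) \<bullet> d \<le> norm d * e"
      using norm_cauchy_schwarz[of "G (y + z *\<^sub>R d) - G y" d]
      by (metis mult.commute mult_left_mono norm_ge_zero order_trans)
    then have "t * (G (y + z *\<^sub>R d) \<bullet> d) \<le> t * (G y \<bullet> d + norm d * e)"
      using t by (intro mult_left_mono) (auto simp: inner_diff_left)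
    with mvt show ?thesis
      by (simp add: algebra_simps)
  qed simp
  with \<open>\<eta> > 0\<close> show thesis
    using that by blast
qed

lemma uniform_armijo:
  fixes F :: "'a::real_inner \<Rightarrow> real"
  assumes "compact C" "continuous_on C G"
    and der: "\<And>y. y \<in> C \<Longrightarrow> (F has_derivative (\<lambda>h. G y \<bullet> h)) (at y)"
    and "\<sigma> < 1" "\<delta> > 0" "K > 0"
  obtains \<eta> where "\<eta> > 0"
    and "\<And>y d t. y \<in> C \<Longrightarrow> G y \<bullet> d \<le> - \<delta> \<Longrightarrow> norm d \<le> K \<Longrightarrow> 0 \<le> t \<Longrightarrow> t < \<eta> \<Longrightarrow>
           (\<And>s. 0 \<le> s \<Longrightarrow> s \<le> t \<Longrightarrow> y + s *\<^sub>R d \<in> C) \<Longrightarrow>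
           F (y + t *\<^sub>R d) \<le> F y + \<sigma> * t * (G y \<bullet> d)"
proof -
  define e where "e = (1 - \<sigma>) * \<delta> / K"
  have "e > 0"
    using assms(4-6) by (simp add: e_def)
  then obtain \<eta>\<^sub>0 where "\<eta>\<^sub>0 > 0"
    and \<eta>\<^sub>0: "\<And>y d t. y \<in> C \<Longrightarrow> 0 \<le> t \<Longrightarrow> t * norm d < \<eta>\<^sub>0 \<Longrightarrow>
           (\<And>s. 0 \<le> s \<Longrightarrow> s \<le> t \<Longrightarrow> y + s *\<^sub>R d \<in> C) \<Longrightarrow>
           F (y + t *\<^sub>R d) \<le> F y + t * (G y \<bullet> d) + t * norm d * e"
    using uniform_first_order_bound[OF assms(1-3)] by metis
  have "F (y + t *\<^sub>R d) \<le> F y + \<sigma> * t * (G y \<bullet> d)"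
    if y: "y \<in> C" and descent: "G y \<bullet> d \<le> - \<delta>" and d: "norm d \<le> K"
      and t: "0 \<le> t" "t < \<eta>\<^sub>0 / K" and seg: "\<And>s. 0 \<le> s \<Longrightarrow> s \<le> t \<Longrightarrow> y + s *\<^sub>R d \<in> C"
    for y d t
  proof -
    have "t * norm d \<le> t * K"
      using t d by (simp add: mult_left_mono)
    moreover have "t * K < \<eta>\<^sub>0"
      using t \<open>K > 0\<close> by (simp add: pos_less_divide_eq)
    ultimately have "F (y + t *\<^sub>R d) \<le> F y + t * (G y \<bullet> d) + t * norm d * e"
      using \<eta>\<^sub>0[OF y t(1) _ seg] by linarith
    also have "t * norm d * e \<le> t * K * e"
      using \<open>t * norm d \<le> t * K\<close> \<open>e > 0\<close> by (simp add: mult_right_mono)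
    also have "t * K * e = t * (1 - \<sigma>) * \<delta>"
      using \<open>K > 0\<close> by (simp add: e_def)
    also have "\<dots> \<le> t * (1 - \<sigma>) * - (G y \<bullet> d)"
      using t descent \<open>\<sigma> < 1\<close> by (intro mult_left_mono) auto
    finally show ?thesis
      by (simp add: algebra_simps)
  qed
  moreover have "\<eta>\<^sub>0 / K > 0"
    using \<open>\<eta>\<^sub>0 > 0\<close> \<open>K > 0\<close> by simp
  ultimately show thesis
    using that by blast
qed

lemma backtracking_step_ge:
  fixes \<theta> \<gamma> \<eta> :: real
  assumes "0 < \<theta>" "\<theta> < 1" "0 < \<gamma>" "0 < \<eta>"
    and accept: "\<And>m. \<theta> ^ m * \<gamma> < \<eta> \<Longrightarrow> P m"
  shows "P (LEAST m. P m)" and "min \<gamma> (\<theta> * \<eta>) \<le> \<theta> ^ (LEAST m. P m) * \<gamma>"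
proof -
  obtain m where "\<theta> ^ m < \<eta> / \<gamma>"
    using real_arch_pow_inv[of "\<eta> / \<gamma>" \<theta>] assms(1-4) by auto
  then have "P m"
    using accept \<open>0 < \<gamma>\<close> by (simp add: pos_less_divide_eq)
  then show "P (LEAST m. P m)"
    by (rule LeastI)
  show "min \<gamma> (\<theta> * \<eta>) \<le> \<theta> ^ (LEAST m. P m) * \<gamma>"
  proof (cases "LEAST m. P m")
    case (Suc p)
    then have "\<not> P p"
      by (metis lessI not_less_Least)
    then have "\<eta> \<le> \<theta> ^ p * \<gamma>"
      using accept by force
    then have "\<theta> * \<eta> \<le> \<theta> * (\<theta> ^ p * \<gamma>)"
      using \<open>0 < \<theta>\<close> by (simp add: mult_left_mono)
    then show ?thesis
      using Suc by (simp add: mult.assoc)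
  qed simp
qed

text \<open>\<open>pair_dir a i j\<close> and \<open>pair_max_step lo up a y i j\<close> are the direction \<open>d\<^sup>k\<close> and the
  initial step \<open>\<gamma>\<^sub>k\<close> of the method; \<open>\<gamma>\<^sub>k\<close> is the largest \<open>t\<close> keeping \<open>y + t d\<^sup>k\<close> in the box.\<close>

definition pair_dir :: "real^'n \<Rightarrow> 'n \<Rightarrow> 'n \<Rightarrow> real^'n" where
  "pair_dir a i j = (\<chi> s. if s = i then - 1 / a $ i else if s = j then 1 / a $ j else 0)"

lemma pair_dir_eq_axis:
  "i \<noteq> j \<Longrightarrow> pair_dir a i j = (- 1 / a $ i) *\<^sub>R axis i 1 + (1 / a $ j) *\<^sub>R axis j 1"
  by (auto simp: pair_dir_def vec_eq_iff axis_def)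

lemma inner_pair_dir:
  "i \<noteq> j \<Longrightarrow> g \<bullet> pair_dir a i j = g $ j / a $ j - g $ i / a $ i"
  by (simp add: pair_dir_eq_axis inner_add_right inner_diff_right inner_axis)

lemma norm_pair_dir_le:
  assumes "i \<noteq> j" "\<And>s. 0 < a $ s"
  shows "norm (pair_dir a i j) \<le> (\<Sum>s\<in>UNIV. 1 / a $ s)"
proof -
  have "norm (pair_dir a i j) \<le> norm ((- 1 / a $ i) *\<^sub>R axis i (1::real)) + norm ((1 / a $ j) *\<^sub>R axis j (1::real))"
    unfolding pair_dir_eq_axis[OF assms(1)] by (rule norm_triangle_ineq)
  also have "\<dots> = (\<Sum>s\<in>{i, j}. 1 / a $ s)"
    using assms by (simp add: less_imp_le)
  also have "\<dots> \<le> (\<Sum>s\<in>UNIV. 1 / a $ s)"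
    by (rule sum_mono2) (use assms less_imp_le in auto)
  finally show ?thesis .
qed

definition pair_max_step :: "real^'n \<Rightarrow> real^'n \<Rightarrow> real^'n \<Rightarrow> real^'n \<Rightarrow> 'n \<Rightarrow> 'n \<Rightarrow> real" where
  "pair_max_step lo up a y i j = min (a $ i * (y $ i - lo $ i)) (a $ j * (up $ j - y $ j))"

lemma pair_dir_step_in_cbox:
  fixes y lo up a :: "real^'n"
  assumes y: "y \<in> cbox lo up" and "i \<noteq> j" and pos: "\<And>s. 0 < a $ s"
    and "0 \<le> t" "t \<le> pair_max_step lo up a y i j"
  shows "y + t *\<^sub>R pair_dir a i j \<in> cbox lo up"
proof -
  have "t / a $ i \<le> y $ i - lo $ i" "t / a $ j \<le> up $ j - y $ j"
    using assms pos[of i] pos[of j] by (simp_all add: pair_max_step_def pos_divide_le_eq mult.commute)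
  moreover have "0 \<le> t / a $ i" "0 \<le> t / a $ j"
    using assms pos[of i] pos[of j] by (simp_all add: less_imp_le)
  ultimately show ?thesis
    using y \<open>i \<noteq> j\<close> unfolding mem_box_cart
    by (auto simp: pair_dir_def) (smt (verit))+
qed

lemma pair_max_step_ge:
  assumes "lo $ i + \<epsilon> / a $ i \<le> y $ i" "y $ j \<le> up $ j - \<epsilon> / a $ j" "0 < a $ i" "0 < a $ j"
  shows "\<epsilon> \<le> pair_max_step lo up a y i j"
  using assms by (simp add: pair_max_step_def field_simps)

lemma bcv_stepE:
  assumes "bcv_step F lo up a \<delta> \<epsilon> \<sigma> \<theta> y y'"
  obtains i j where "lo $ i + \<epsilon> / a $ i \<le> y $ i" "y $ j \<le> up $ j - \<epsilon> / a $ j"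
    and "\<delta> \<le> grad F y $ i / a $ i - grad F y $ j / a $ j"
    and "y' = y + (\<theta> ^ (LEAST m. F (y + (\<theta> ^ m * pair_max_step lo up a y i j) *\<^sub>R pair_dir a i j)
                    \<le> F y + \<sigma> * (\<theta> ^ m * pair_max_step lo up a y i j) * (grad F y \<bullet> pair_dir a i j))
                 * pair_max_step lo up a y i j) *\<^sub>R pair_dir a i j"
  using assms unfolding bcv_step_def pair_dir_def pair_max_step_def Let_def
  by (auto simp: mult.assoc)

lemma bcv_step_decrease:
  fixes F :: "real^'n \<Rightarrow> real" and G :: "real^'n \<Rightarrow> real^'n"
  assumes y: "y \<in> cbox lo up" and step: "bcv_step F lo up a \<delta> \<epsilon> \<sigma> \<theta> y y'"
    and "grad F y = G y" and pos: "\<And>s. 0 < a $ s"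
    and "0 < \<sigma>" "0 < \<theta>" "\<theta> < 1" "0 < \<delta>" "0 < \<epsilon>" "0 < \<eta>"
    and armijo: "\<And>d t. G y \<bullet> d \<le> - \<delta> \<Longrightarrow> norm d \<le> (\<Sum>s\<in>UNIV. 1 / a $ s) \<Longrightarrow>
           0 \<le> t \<Longrightarrow> t < \<eta> \<Longrightarrow> (\<And>s. 0 \<le> s \<Longrightarrow> s \<le> t \<Longrightarrow> y + s *\<^sub>R d \<in> cbox lo up) \<Longrightarrow>
           F (y + t *\<^sub>R d) \<le> F y + \<sigma> * t * (G y \<bullet> d)"
  shows "y' \<in> cbox lo up \<and> F y' \<le> F y - \<sigma> * \<delta> * min \<epsilon> (\<theta> * \<eta>)"
proof -
  obtain i j where i: "lo $ i + \<epsilon> / a $ i \<le> y $ i" and j: "y $ j \<le> up $ j - \<epsilon> / a $ j"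
    and gap: "\<delta> \<le> grad F y $ i / a $ i - grad F y $ j / a $ j"
    and y': "y' = y + (\<theta> ^ (LEAST m. F (y + (\<theta> ^ m * pair_max_step lo up a y i j) *\<^sub>R pair_dir a i j)
                    \<le> F y + \<sigma> * (\<theta> ^ m * pair_max_step lo up a y i j) * (grad F y \<bullet> pair_dir a i j))
                 * pair_max_step lo up a y i j) *\<^sub>R pair_dir a i j"
    using step by (rule bcv_stepE)
  define \<gamma> where "\<gamma> = pair_max_step lo up a y i j"
  define d where "d = pair_dir a i j"
  define P where "P m \<longleftrightarrow> F (y + (\<theta> ^ m * \<gamma>) *\<^sub>R d) \<le> F y + \<sigma> * (\<theta> ^ m * \<gamma>) * (G y \<bullet> d)" for m
  define \<tau> where "\<tau> = \<theta> ^ (LEAST m. P m) * \<gamma>"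
  have y': "y' = y + \<tau> *\<^sub>R d"
    using y' \<open>grad F y = G y\<close> by (simp add: P_def \<gamma>_def d_def \<tau>_def)
  have "i \<noteq> j"
    using gap \<open>0 < \<delta>\<close> by auto
  have "\<epsilon> \<le> \<gamma>"
    unfolding \<gamma>_def using i j pos[of i] pos[of j] by (rule pair_max_step_ge)
  have descent: "G y \<bullet> d \<le> - \<delta>"
    using gap \<open>grad F y = G y\<close> \<open>i \<noteq> j\<close> by (simp add: d_def inner_pair_dir)
  have "norm d \<le> (\<Sum>s\<in>UNIV. 1 / a $ s)"
    unfolding d_def using \<open>i \<noteq> j\<close> pos by (rule norm_pair_dir_le)
  have short_step: "0 \<le> \<theta> ^ m * \<gamma> \<and> \<theta> ^ m * \<gamma> \<le> \<gamma>" for m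
    using \<open>0 < \<epsilon>\<close> \<open>\<epsilon> \<le> \<gamma>\<close> \<open>0 < \<theta>\<close> \<open>\<theta> < 1\<close> by (simp add: mult_left_le_one_le power_le_one)
  have in_box: "y + t *\<^sub>R d \<in> cbox lo up" if "0 \<le> t" "t \<le> \<gamma>" for t
    using pair_dir_step_in_cbox[OF y \<open>i \<noteq> j\<close> pos that(1)] that(2) by (simp add: \<gamma>_def d_def)
  have "P m" if "\<theta> ^ m * \<gamma> < \<eta>" for m
    unfolding P_def using short_step[of m] that
    by (intro armijo[OF descent \<open>norm d \<le> _\<close>]) (auto intro: in_box)
  from backtracking_step_ge[of \<theta> \<gamma> \<eta> P, OF \<open>0 < \<theta>\<close> \<open>\<theta> < 1\<close> _ \<open>0 < \<eta>\<close> this]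
  have accepted: "P (LEAST m. P m)" and long: "min \<gamma> (\<theta> * \<eta>) \<le> \<tau>"
    using \<open>0 < \<epsilon>\<close> \<open>\<epsilon> \<le> \<gamma>\<close> by (auto simp: \<tau>_def)
  have "0 \<le> \<sigma> * \<tau>"
    using short_step \<open>0 < \<sigma>\<close> by (simp add: \<tau>_def)
  have "F y' \<le> F y + \<sigma> * \<tau> * (G y \<bullet> d)"
    using accepted y' by (simp add: P_def \<tau>_def)
  also have "\<dots> \<le> F y - \<sigma> * \<delta> * \<tau>"
    using mult_left_mono[OF descent \<open>0 \<le> \<sigma> * \<tau>\<close>] by (simp add: mult_ac)
  also have "\<dots> \<le> F y - \<sigma> * \<delta> * min \<epsilon> (\<theta> * \<eta>)"
    using long \<open>\<epsilon> \<le> \<gamma>\<close> \<open>0 < \<sigma>\<close> \<open>0 < \<delta>\<close> by simp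
  finally show ?thesis
    using y' in_box short_step by (simp add: \<tau>_def)
qed

lemma bcv_step_sufficient_decrease:
  fixes F :: "real^'n \<Rightarrow> real" and G :: "real^'n \<Rightarrow> real^'n"
  assumes "continuous_on (cbox lo up) G"
    and der: "\<And>y. y \<in> cbox lo up \<Longrightarrow> (F has_derivative (\<lambda>h. G y \<bullet> h)) (at y)"
    and pos: "\<And>s. 0 < a $ s"
    and "0 < \<sigma>" "\<sigma> < 1" "0 < \<theta>" "\<theta> < 1" "0 < \<delta>" "0 < \<epsilon>"
  obtains c where "c > 0"
    and "\<And>y y'. y \<in> cbox lo up \<Longrightarrow> bcv_step F lo up a \<delta> \<epsilon> \<sigma> \<theta> y y' \<Longrightarrow>
           y' \<in> cbox lo up \<and> F y' \<le> F y - c"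
proof -
  have "(\<Sum>s\<in>UNIV. 1 / a $ s) > 0"
    using pos by (intro sum_pos) auto
  from uniform_armijo[OF compact_cbox assms(1) der \<open>\<sigma> < 1\<close> \<open>0 < \<delta>\<close> this]
  obtain \<eta> where "\<eta> > 0"
    and armijo: "\<And>y d t. y \<in> cbox lo up \<Longrightarrow> G y \<bullet> d \<le> - \<delta> \<Longrightarrow> norm d \<le> (\<Sum>s\<in>UNIV. 1 / a $ s) \<Longrightarrow>
           0 \<le> t \<Longrightarrow> t < \<eta> \<Longrightarrow> (\<And>s. 0 \<le> s \<Longrightarrow> s \<le> t \<Longrightarrow> y + s *\<^sub>R d \<in> cbox lo up) \<Longrightarrow>
           F (y + t *\<^sub>R d) \<le> F y + \<sigma> * t * (G y \<bullet> d)"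
    by metis
  have "\<sigma> * \<delta> * min \<epsilon> (\<theta> * \<eta>) > 0"
    using assms(4-9) \<open>\<eta> > 0\<close> by simp
  moreover have "y' \<in> cbox lo up \<and> F y' \<le> F y - \<sigma> * \<delta> * min \<epsilon> (\<theta> * \<eta>)"
    if "y \<in> cbox lo up" "bcv_step F lo up a \<delta> \<epsilon> \<sigma> \<theta> y y'" for y y'
    by (rule bcv_step_decrease[where G = G, OF that _ pos assms(4,6-9) \<open>\<eta> > 0\<close>])
      (use grad_eq_of_has_derivative der armijo that in blast)+
  ultimately show thesis
    using that by blast
qed

lemma no_infinite_uniform_descent:
  fixes F :: "'a \<Rightarrow> real"
  assumes "bdd_below (F ` C)" "c > 0"
    and descent: "\<And>y y'. y \<in> C \<Longrightarrow> R y y' \<Longrightarrow> y' \<in> C \<and> F y' \<le> F y - c"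
    and "x 0 \<in> C" "\<And>k. R (x k) (x (Suc k))"
  shows False
proof -
  have iter: "x k \<in> C \<and> F (x k) \<le> F (x 0) - real k * c" for k
  proof (induction k)
    case (Suc k)
    then show ?case
      using descent[of "x k" "x (Suc k)"] assms(5) by (auto simp: algebra_simps)
  qed (use assms(4) in simp)
  obtain b where b: "\<And>y. y \<in> C \<Longrightarrow> b \<le> F y"
    using assms(1) by (auto simp: bdd_below_def)
  obtain k where "F (x 0) - b < real k * c"
    using reals_Archimedean3[OF \<open>c > 0\<close>] by blast
  with iter[of k] b[of "x k"] show False
    by linarith
qed

theorem proposition4p1:
  fixes f :: "real^'n \<Rightarrow> real"
    and fl :: "nat \<Rightarrow> real^'n \<Rightarrow> real"
    and lo up a :: "nat \<Rightarrow> real^'n"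
    and \<beta> :: "nat \<Rightarrow> real"
    and lo_lim up_lim a_lim :: "real^'n"
    and \<beta>_lim :: real
    and \<sigma> \<theta> :: real
    and \<delta> \<epsilon> :: "nat \<Rightarrow> real"
  assumes A2_nonempty: "\<And>l. feas_set (lo l) (up l) (a l) (\<beta> l) \<noteq> {}"
    and A2_pos: "\<And>l i. a l $ i > 0"
    and A2_box: "\<And>l i. lo l $ i < up l $ i"
    and A2_lo: "lo \<longlonglongrightarrow> lo_lim"
    and A2_up: "up \<longlonglongrightarrow> up_lim"
    and A2_a: "a \<longlonglongrightarrow> a_lim"
    and A2_beta: "\<beta> \<longlonglongrightarrow> \<beta>_lim"
    and A3_C1: "\<And>l. \<exists>U G. open U \<and> box_set (lo l) (up l) \<subseteq> U \<and> continuous_on U G \<and>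
                     (\<forall>x\<in>U. (fl l has_derivative (\<lambda>h. G x \<bullet> h)) (at x))"
    and A3_grad: "\<And>y ybar. (\<forall>l. y l \<in> feas_set (lo l) (up l) (a l) (\<beta> l)) \<Longrightarrow>
                     y \<longlonglongrightarrow> ybar \<Longrightarrow>
                     \<exists>gbar. (\<lambda>l. grad (fl l) (y l)) \<longlonglongrightarrow> gbar \<and> gbar \<in> clarke_grad f ybar"
    and sigma: "0 < \<sigma>" "\<sigma> < 1"
    and theta: "0 < \<theta>" "\<theta> < 1"
    and delta: "\<And>l. \<delta> l > 0" "decseq \<delta>" "\<delta> \<longlonglongrightarrow> 0"
    and eps: "\<And>l. \<epsilon> l > 0" "decseq \<epsilon>" "\<epsilon> \<longlonglongrightarrow> 0"
    and stage: "l \<ge> 1"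
    and zprev: "z \<in> feas_set (lo (l - 1)) (up (l - 1)) (a (l - 1)) (\<beta> (l - 1))"
  shows "\<not> (\<exists>x :: nat \<Rightarrow> real^'n.
             x 0 = closest_point (feas_set (lo l) (up l) (a l) (\<beta> l)) z \<and>
             (\<forall>k. bcv_step (fl l) (lo l) (up l) (a l) (\<delta> l) (\<epsilon> l) \<sigma> \<theta> (x k) (x (Suc k))))"
proof
  assume "\<exists>x :: nat \<Rightarrow> real^'n.
             x 0 = closest_point (feas_set (lo l) (up l) (a l) (\<beta> l)) z \<and>
             (\<forall>k. bcv_step (fl l) (lo l) (up l) (a l) (\<delta> l) (\<epsilon> l) \<sigma> \<theta> (x k) (x (Suc k)))"
  then obtain x :: "nat \<Rightarrow> real^'n"
    where x0: "x 0 = closest_point (feas_set (lo l) (up l) (a l) (\<beta> l)) z"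
      and steps: "\<And>k. bcv_step (fl l) (lo l) (up l) (a l) (\<delta> l) (\<epsilon> l) \<sigma> \<theta> (x k) (x (Suc k))"
    by blast
  obtain U G where "cbox (lo l) (up l) \<subseteq> U" "continuous_on U G"
    and der: "\<And>y. y \<in> U \<Longrightarrow> (fl l has_derivative (\<lambda>h. G y \<bullet> h)) (at y)"
    using A3_C1[of l] unfolding box_set_eq_cbox by blast
  then have G: "continuous_on (cbox (lo l) (up l)) G"
    and der_box: "\<And>y. y \<in> cbox (lo l) (up l) \<Longrightarrow> (fl l has_derivative (\<lambda>h. G y \<bullet> h)) (at y)"
    by (auto intro: continuous_on_subset)
  obtain c where "c > 0" and descent: "\<And>y y'. y \<in> cbox (lo l) (up l) \<Longrightarrow>
      bcv_step (fl l) (lo l) (up l) (a l) (\<delta> l) (\<epsilon> l) \<sigma> \<theta> y y' \<Longrightarrow>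
      y' \<in> cbox (lo l) (up l) \<and> fl l y' \<le> fl l y - c"
    using bcv_step_sufficient_decrease[OF G der_box A2_pos sigma theta delta(1) eps(1)] by metis
  have "continuous_on (cbox (lo l) (up l)) (fl l)"
    using der_box by (meson continuous_at_imp_continuous_on has_derivative_continuous)
  then have "bdd_below (fl l ` cbox (lo l) (up l))"
    by (simp add: bounded_imp_bdd_below compact_continuous_image compact_imp_bounded)
  moreover have "x 0 \<in> cbox (lo l) (up l)"
    unfolding x0 using closest_point_in_set[OF closed_feas_set A2_nonempty] feas_set_subset_cbox by blast
  ultimately show False
    using no_infinite_uniform_descent[OF _ \<open>c > 0\<close> descent] steps by blast
qed

end
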